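(* Assume $\mathcal A$ is convex and closed, $\mathcal P$ is convex and closed, $V_0$ is convex and lower semicontinuous, and $V_1$ is superlinear. Then $\mathcal N:=\mathcal L\cap(-\mathcal L)$ is a linear subspace of $\mathbb R^N$, and for every $(X,m)\in\mathcal C$ there exists $x\in\mathcal P\cap\mathcal N^\perp$ with $V_0(x)\le m$ and $X+V_1(x)\in\mathcal A$, where $\mathcal N^\perp$ is the orthogonal complement of $\mathcal N$ in $\operatorname{span}(\mathcal P)$.
   Context: Standing setup: Let $\mathcal{X}$ be a real topological vector space partially ordered by a convex cone $\mathcal{X}_+\subset\mathcal X$; write $X\ge Y$ iff $X-Y\in\mathcal X_+$. Fix $N\in\mathbb N$ and: a set $\mathcal P\subset\mathbb R^N$ with $0\in\mathcal P$; a function $V_0:\mathbb R^N\to\mathbb R$ with $V_0(0)=0$ and $V_0(x)\ge -V_0(-x)$ for all $x\in\mathbb R^N$; a map $V_1:\mathbb R^N\to\mathcal X$ with $V_1(0)=0$ and $V_1(x)\le -V_1(-x)$ for all $x\in\mathbb R^N$; a set $\mathcal A\subset\mathcal X$ with $0\in\mathcal A$ and $\mathcal A+\mathcal X_+\subset\mathcal A$. $V_1$ is superlinear if it is concave ($V_1(\lambda x+(1-\lambda)y)\ge\lambda V_1(x)+(1-\lambda)V_1(y)$, $\lambda\in[0,1]$) and positively homogeneous ($V_1(\lambda x)=\lambda V_1(x)$, $\lambda\ge0$). Asymptotic notions: for a nonempty set $C$ in a topological vector space, $C^\infty=\{X:\exists\text{ nets }(X_\alpha)\subset C,\ (\lambda_\alpha)\subset[0,\infty),\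 \lambda_\alpha\to0,\ \lambda_\alpha X_\alpha\to X\}$. For $f:\mathbb R^N\to\mathbb R$, its asymptotic function $f^\infty:\mathbb R^N\to[-\infty,\infty]$ is the function whose epigraph $\{(x,m)\in\mathbb R^N\times\mathbb R: f^\infty(x)\le m\}$ equals $(\operatorname{epi}f)^\infty$, where $\operatorname{epi}f=\{(x,m)\in\mathbb R^N\times\mathbb R: f(x)\le m\}$. $\mathcal L=\{x\in\mathcal P^\infty: V_0^\infty(x)\le0,\ V_1(x)\in\mathcal A^\infty\}$, and $\mathcal C=\{(X,m)\in\mathcal X\times\mathbb R:\exists x\in\mathcal P \text{ with } V_0(x)\le m,\ X+V_1(x)\in\mathcal A\}$. *)

theory Defs
  imports "HOL-Analysis.Analysis"
begin

definition tvs_axioms :: "'a::{real_vector,topological_space} itself \<Rightarrow> bool" where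
  "tvs_axioms _ \<longleftrightarrow>
     continuous_on (UNIV :: ('a \<times> 'a) set) (\<lambda>p. fst p + snd p) \<and>
     continuous_on (UNIV :: (real \<times> 'a) set) (\<lambda>p. fst p *\<^sub>R snd p)"

text \<open>A net is represented by a (proper) filter on the pairs
(X_alpha, lambda_alpha): the net X_alpha in C, lambda_alpha \<ge> 0,
lambda_alpha \<rightarrow> 0 and lambda_alpha X_alpha \<rightarrow> X.\<close>
definition asym_cone :: "'a::{real_vector,topological_space} set \<Rightarrow> 'a set" where
  "asym_cone C = {X. \<exists>F :: ('a \<times> real) filter. F \<noteq> bot \<and>
       eventually (\<lambda>p. fst p \<in> C \<and> snd p \<ge> 0) F \<and>
       (snd \<longlongrightarrow> 0) F \<and>
       ((\<lambda>p. snd p *\<^sub>R fst p) \<longlongrightarrow> X) F}"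

definition epigraph :: "('b \<Rightarrow> real) \<Rightarrow> ('b \<times> real) set" where
  "epigraph f = {(x, m). f x \<le> m}"

definition asym_fun :: "('b::{real_vector,topological_space} \<Rightarrow> real) \<Rightarrow> 'b \<Rightarrow> ereal" where
  "asym_fun f x = Inf {ereal m | m. (x, m) \<in> asym_cone (epigraph f)}"

definition lower_semicont :: "('b::topological_space \<Rightarrow> real) \<Rightarrow> bool" where
  "lower_semicont f \<longleftrightarrow> (\<forall>c. closed {x. f x \<le> c})"

definition cone_le :: "'a::real_vector set \<Rightarrow> 'a \<Rightarrow> 'a \<Rightarrow> bool" where
  "cone_le Xp X Y \<longleftrightarrow> Y - X \<in> Xp"

definition superlinear :: "'a::real_vector set \<Rightarrow> ('b::real_vector \<Rightarrow> 'a) \<Rightarrow> bool" where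
  "superlinear Xp V \<longleftrightarrow>
     (\<forall>x y. \<forall>l::real. 0 \<le> l \<and> l \<le> 1 \<longrightarrow>
        cone_le Xp (l *\<^sub>R V x + (1 - l) *\<^sub>R V y) (V (l *\<^sub>R x + (1 - l) *\<^sub>R y))) \<and>
     (\<forall>x. \<forall>l::real. 0 \<le> l \<longrightarrow> V (l *\<^sub>R x) = l *\<^sub>R V x)"

definition L_set :: "'a::{real_vector,topological_space} set \<Rightarrow> ('b::{real_vector,topological_space} \<Rightarrow> real)
     \<Rightarrow> ('b \<Rightarrow> 'a) \<Rightarrow> 'b set \<Rightarrow> 'b set" where
  "L_set A V0 V1 P = {x \<in> asym_cone P. asym_fun V0 x \<le> 0 \<and> V1 x \<in> asym_cone A}"

definition C_set :: "'a::real_vector set \<Rightarrow> ('b \<Rightarrow> real) \<Rightarrow> ('b \<Rightarrow> 'a) \<Rightarrow> 'b set \<Rightarrow> ('a \<times> real) set" where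
  "C_set A V0 V1 P = {(X, m). \<exists>x\<in>P. V0 x \<le> m \<and> X + V1 x \<in> A}"

definition orth_compl_in :: "'b::real_inner set \<Rightarrow> 'b set \<Rightarrow> 'b set" where
  "orth_compl_in P N = {y \<in> span P. \<forall>z\<in>N. inner z y = 0}"

end

theory Submission
  imports Defs
begin

text \<open>For closed convex sets containing \<open>0\<close> the asymptotic cone consists of the directions
  whose whole ray stays in the set, and the asymptotic function of a lower semicontinuous convex
  \<open>V\<^sub>0\<close> with \<open>V\<^sub>0 0 = 0\<close> is nonpositive exactly along the rays on which \<open>V\<^sub>0\<close> is.
  Hence \<open>\<L>\<close> is the set of directions \<open>d\<close> with \<open>t d \<in> \<P>\<close>, \<open>V\<^sub>0 (t d) \<le> 0\<close> and
  \<open>t V\<^sub>1 d \<in> \<A>\<close> for all \<open>t \<ge> 0\<close>; superlinearity of \<open>V\<^sub>1\<close> and upward closedness of \<open>\<A>\<close>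
  make it a convex cone, so its lineality space \<open>\<N> = \<L> \<inter> -\<L>\<close> is a subspace.
  Every \<open>d \<in> \<L>\<close> is a recession direction of the feasible set: \<open>x + d\<close> stays in \<open>\<P>\<close>,
  does not increase \<open>V\<^sub>0\<close>, and \<open>X + V\<^sub>1 (x + d) \<ge> X + V\<^sub>1 x + V\<^sub>1 d \<in> \<A>\<close>. Subtracting
  from a feasible \<open>x\<close> its orthogonal projection onto \<open>\<N>\<close> therefore gives a feasible point
  orthogonal to \<open>\<N>\<close>.\<close>

lemma tendsto_add_tvs:
  assumes "tvs_axioms TYPE('a::{real_vector,topological_space})"
    and "(f \<longlongrightarrow> (a::'a)) F" and "(g \<longlongrightarrow> b) F"
  shows "((\<lambda>x. f x + g x) \<longlongrightarrow> a + b) F"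
proof -
  have "continuous_on (UNIV :: ('a \<times> 'a) set) (\<lambda>p. fst p + snd p)"
    using assms(1) unfolding tvs_axioms_def by blast
  from continuous_on_tendsto_compose[OF this tendsto_Pair[OF assms(2,3)]] show ?thesis by simp
qed

lemma tendsto_scaleR_tvs:
  assumes "tvs_axioms TYPE('a::{real_vector,topological_space})"
    and "(f \<longlongrightarrow> (r::real)) F" and "(g \<longlongrightarrow> (b::'a)) F"
  shows "((\<lambda>x. f x *\<^sub>R g x) \<longlongrightarrow> r *\<^sub>R b) F"
proof -
  have "continuous_on (UNIV :: (real \<times> 'a) set) (\<lambda>p. fst p *\<^sub>R snd p)"
    using assms(1) unfolding tvs_axioms_def by blast
  from continuous_on_tendsto_compose[OF this tendsto_Pair[OF assms(2,3)]] show ?thesis by simp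
qed

lemma tvs_axioms_real_normed_vector: "tvs_axioms TYPE('a::real_normed_vector)"
  unfolding tvs_axioms_def by (intro conjI continuous_intros)

lemma ray_in_asym_cone:
  assumes "\<And>t. t \<ge> 0 \<Longrightarrow> t *\<^sub>R d \<in> C"
  shows "d \<in> asym_cone C"
proof -
  define F where "F = filtermap (\<lambda>n::nat. (real (Suc n) *\<^sub>R d, 1 / real (Suc n))) sequentially"
  have "F \<noteq> bot" unfolding F_def by (simp add: filtermap_bot_iff)
  moreover have "eventually (\<lambda>p. fst p \<in> C \<and> snd p \<ge> 0) F"
    unfolding F_def eventually_filtermap using assms by simp
  moreover have "(snd \<longlongrightarrow> 0) F"
    unfolding F_def filterlim_filtermap using LIMSEQ_Suc[OF lim_inverse_n'] by (simp add: o_def)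
  moreover have "((\<lambda>p. snd p *\<^sub>R fst p) \<longlongrightarrow> d) F"
    unfolding F_def filterlim_filtermap by simp
  ultimately show ?thesis unfolding asym_cone_def by blast
qed

lemma asym_cone_ray:
  fixes C :: "'a::{real_vector,topological_space} set"
  assumes tvs: "tvs_axioms TYPE('a)" and "closed C" "convex C" "0 \<in> C"
    and "d \<in> asym_cone C" and t: "t \<ge> 0"
  shows "t *\<^sub>R d \<in> C"
proof -
  obtain F :: "('a \<times> real) filter" where "F \<noteq> bot"
    and in_C: "eventually (\<lambda>p. fst p \<in> C \<and> snd p \<ge> 0) F"
    and "(snd \<longlongrightarrow> 0) F" and lim: "((\<lambda>p. snd p *\<^sub>R fst p) \<longlongrightarrow> d) F"
    using \<open>d \<in> asym_cone C\<close> unfolding asym_cone_def by blast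
  have "eventually (\<lambda>p. snd p < 1 / (t + 1)) F"
    using order_tendstoD(2)[OF \<open>(snd \<longlongrightarrow> 0) F\<close>] t by simp
  with in_C have "eventually (\<lambda>p. t *\<^sub>R (snd p *\<^sub>R fst p) \<in> C) F"
  proof eventually_elim
    case (elim p)
    have "t * snd p \<le> t * (1 / (t + 1))"
      using elim t by (intro mult_left_mono) auto
    also have "\<dots> \<le> 1" using t by simp
    finally have "t * snd p \<le> 1" .
    then have "(1 - t * snd p) *\<^sub>R 0 + (t * snd p) *\<^sub>R fst p \<in> C"
      using \<open>convex C\<close> \<open>0 \<in> C\<close> elim t by (intro convexD) auto
    then show ?case by simp
  qed
  from Lim_in_closed_set[OF \<open>closed C\<close> this \<open>F \<noteq> bot\<close> tendsto_scaleR_tvs[OF tvs tendsto_const lim]]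
  show ?thesis .
qed

lemma asym_cone_closed_convex_iff:
  fixes C :: "'a::{real_vector,topological_space} set"
  assumes "tvs_axioms TYPE('a)" "closed C" "convex C" "0 \<in> C"
  shows "d \<in> asym_cone C \<longleftrightarrow> (\<forall>t\<ge>0. t *\<^sub>R d \<in> C)"
  using asym_cone_ray[OF assms] ray_in_asym_cone by blast

text \<open>A direction of a closed convex set is a recession direction from every point:
  \<open>x + d\<close> is the limit of the points \<open>(1 - s) x + s (d / s)\<close> of \<open>C\<close> as \<open>s \<rightarrow> 0\<close>.\<close>
lemma closed_convex_add_ray:
  fixes C :: "'a::{real_vector,topological_space} set"
  assumes tvs: "tvs_axioms TYPE('a)" and "closed C" "convex C" "x \<in> C"
    and ray: "\<And>t. t \<ge> 0 \<Longrightarrow> t *\<^sub>R d \<in> C"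
  shows "x + d \<in> C"
proof -
  define s where "s n = 1 / real (Suc n)" for n
  have "s \<longlonglongrightarrow> 0" unfolding s_def using LIMSEQ_Suc[OF lim_inverse_n'] by (simp add: o_def)
  then have "((\<lambda>n. (1 - s n) *\<^sub>R x + d) \<longlongrightarrow> (1 - 0) *\<^sub>R x + d) sequentially"
    by (intro tendsto_add_tvs[OF tvs] tendsto_scaleR_tvs[OF tvs] tendsto_intros)
  then have lim: "((\<lambda>n. (1 - s n) *\<^sub>R x + d) \<longlongrightarrow> x + d) sequentially"
    by simp
  have in_C: "(1 - s n) *\<^sub>R x + d \<in> C" for n
  proof -
    have s: "0 < s n" "s n \<le> 1" unfolding s_def by (auto simp: field_simps)
    then have "(1 - s n) *\<^sub>R x + s n *\<^sub>R ((1 / s n) *\<^sub>R d) \<in> C"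
      using \<open>convex C\<close> \<open>x \<in> C\<close> ray by (intro convexD) auto
    then show ?thesis using s by simp
  qed
  show ?thesis
    using Lim_in_closed_set[OF \<open>closed C\<close> always_eventually trivial_limit_sequentially lim] in_C
    by blast
qed

lemma closed_epigraph:
  fixes f :: "'b::topological_space \<Rightarrow> real"
  assumes "lower_semicont f"
  shows "closed (epigraph f)"
proof -
  have "- epigraph f = (\<Union>c. {x. c < f x} \<times> {..<c})"
  proof (intro equalityI subsetI)
    fix p assume "p \<in> - epigraph f"
    then obtain x m where p: "p = (x, m)" and "m < f x" by (cases p) (auto simp: epigraph_def)
    then obtain c where "m < c" "c < f x" using dense by blast
    then show "p \<in> (\<Union>c. {x. c < f x} \<times> {..<c})" using p by blast
  qed (auto simp: epigraph_def)
  moreover have "open ({x. c < f x} \<times> {..<c})" for c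
  proof -
    have "{x. c < f x} = - {x. f x \<le> c}" by auto
    then show ?thesis
      using assms by (auto simp: lower_semicont_def intro!: open_Times)
  qed
  ultimately show ?thesis unfolding closed_def by auto
qed

lemma convex_epigraph_convex_on:
  assumes "convex_on UNIV f"
  shows "convex (epigraph f)"
proof -
  have "epigraph f = Convex.epigraph UNIV f"
    by (auto simp: epigraph_def Convex.epigraph_def)
  then show ?thesis using convex_epigraphI[OF assms] by simp
qed

lemma asym_cone_epigraph_iff:
  fixes f :: "'b::real_normed_vector \<Rightarrow> real"
  assumes "lower_semicont f" "convex_on UNIV f" "f 0 = 0"
  shows "(x, m) \<in> asym_cone (epigraph f) \<longleftrightarrow> (\<forall>t\<ge>0. f (t *\<^sub>R x) \<le> t * m)"
proof -
  have "0 \<in> epigraph f" using assms(3) by (simp add: epigraph_def zero_prod_def)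
  from asym_cone_closed_convex_iff[OF tvs_axioms_real_normed_vector closed_epigraph[OF assms(1)]
      convex_epigraph_convex_on[OF assms(2)] this]
  show ?thesis by (simp add: epigraph_def)
qed

lemma asym_fun_nonpos_iff:
  fixes f :: "'b::real_normed_vector \<Rightarrow> real"
  assumes "lower_semicont f" "convex_on UNIV f" "f 0 = 0"
  shows "asym_fun f x \<le> 0 \<longleftrightarrow> (\<forall>t\<ge>0. f (t *\<^sub>R x) \<le> 0)"
proof
  assume nonpos: "asym_fun f x \<le> 0"
  show "\<forall>t\<ge>0. f (t *\<^sub>R x) \<le> 0"
  proof (intro allI impI)
    fix t :: real assume t: "t \<ge> 0"
    show "f (t *\<^sub>R x) \<le> 0"
    proof (rule field_le_epsilon)
      fix e :: real assume e: "e > 0"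
      have "0 < ereal (e / (t + 1))" using e t by simp
      with nonpos have "asym_fun f x < ereal (e / (t + 1))" by (rule le_less_trans)
      then obtain y where "y \<in> {ereal m | m. (x, m) \<in> asym_cone (epigraph f)}" "y < e / (t + 1)"
        unfolding asym_fun_def using Inf_less_iff by blast
      then obtain m where m: "(x, m) \<in> asym_cone (epigraph f)" "m < e / (t + 1)" by auto
      have "f (t *\<^sub>R x) \<le> t * m" using m(1) t asym_cone_epigraph_iff[OF assms] by blast
      also have "\<dots> \<le> t * (e / (t + 1))" using m(2) t by (intro mult_left_mono) auto
      also have "\<dots> \<le> e" using t e by (simp add: field_simps)
      finally show "f (t *\<^sub>R x) \<le> 0 + e" by simp
    qed
  qed
next
  assume "\<forall>t\<ge>0. f (t *\<^sub>R x) \<le> 0"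
  then have "(x, 0) \<in> asym_cone (epigraph f)" using asym_cone_epigraph_iff[OF assms] by simp
  then have "asym_fun f x \<le> ereal 0" unfolding asym_fun_def by (blast intro: Inf_lower)
  then show "asym_fun f x \<le> 0" by (simp add: zero_ereal_def)
qed

lemma superlinear_scaleR: "superlinear Xp V \<Longrightarrow> 0 \<le> c \<Longrightarrow> V (c *\<^sub>R x) = c *\<^sub>R V x"
  unfolding superlinear_def by blast

lemma superlinear_concave:
  "superlinear Xp V \<Longrightarrow> 0 \<le> l \<Longrightarrow> l \<le> 1 \<Longrightarrow>
    cone_le Xp (l *\<^sub>R V x + (1 - l) *\<^sub>R V y) (V (l *\<^sub>R x + (1 - l) *\<^sub>R y))"
  unfolding superlinear_def by blast

lemma superlinear_zero: "superlinear Xp V \<Longrightarrow> V 0 = 0"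
  using superlinear_scaleR[of Xp V 0 0] by simp

lemma superlinear_superadditive:
  assumes "superlinear Xp V"
  shows "cone_le Xp (V a + V b) (V (a + b))"
  using superlinear_concave[OF assms, of "1/2" "2 *\<^sub>R a" "2 *\<^sub>R b"]
    superlinear_scaleR[OF assms, of 2] by (simp add: scaleR_add_right)

lemma cone_le_upward_closed:
  assumes "\<forall>X\<in>A. \<forall>Y\<in>Xp. X + Y \<in> A" "X \<in> A" "cone_le Xp X Y"
  shows "Y \<in> A"
  using assms unfolding cone_le_def by (metis add.commute diff_add_cancel)

definition recession_dirs ::
    "'a::real_vector set \<Rightarrow> ('b::real_vector \<Rightarrow> real) \<Rightarrow> ('b \<Rightarrow> 'a) \<Rightarrow> 'b set \<Rightarrow> 'b set" where
  "recession_dirs A V0 V1 P = {d. \<forall>t\<ge>0. t *\<^sub>R d \<in> P \<and> V0 (t *\<^sub>R d) \<le> 0 \<and> t *\<^sub>R V1 d \<in> A}"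

lemma L_set_eq_recession_dirs:
  fixes A :: "'a::{real_vector,topological_space} set" and P :: "'b::real_normed_vector set"
  assumes "tvs_axioms TYPE('a)" "closed A" "convex A" "0 \<in> A"
    and "closed P" "convex P" "0 \<in> P"
    and "lower_semicont V0" "convex_on UNIV V0" "V0 0 = 0"
  shows "L_set A V0 V1 P = recession_dirs A V0 V1 P"
  unfolding L_set_def recession_dirs_def
  using asym_cone_closed_convex_iff[OF assms(1-4)]
    asym_cone_closed_convex_iff[OF tvs_axioms_real_normed_vector assms(5-7)]
    asym_fun_nonpos_iff[OF assms(8-10)] by auto

lemma convex_cone_recession_dirs:
  assumes "convex P" "0 \<in> P" "convex_on UNIV V0" "V0 0 = 0"
    and "convex A" "0 \<in> A" and A_up: "\<forall>X\<in>A. \<forall>Y\<in>Xp. X + Y \<in> A"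
    and V1: "superlinear Xp V1"
  shows "convex_cone (recession_dirs A V0 V1 P)"
  unfolding convex_cone_def
proof (intro conjI)
  have "0 \<in> recession_dirs A V0 V1 P"
    using assms superlinear_zero[OF V1] by (simp add: recession_dirs_def)
  then show "recession_dirs A V0 V1 P \<noteq> {}" by blast
  show "conic (recession_dirs A V0 V1 P)"
    unfolding conic_def
  proof (intro allI impI)
    fix d and c :: real
    assume d: "d \<in> recession_dirs A V0 V1 P" and "0 \<le> c"
    have "(t * c) *\<^sub>R d \<in> P \<and> V0 ((t * c) *\<^sub>R d) \<le> 0 \<and> (t * c) *\<^sub>R V1 d \<in> A" if "t \<ge> 0" for t
      using d \<open>0 \<le> c\<close> that by (simp add: recession_dirs_def)
    then show "c *\<^sub>R d \<in> recession_dirs A V0 V1 P"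
      by (simp add: recession_dirs_def superlinear_scaleR[OF V1 \<open>0 \<le> c\<close>])
  qed
  show "convex (recession_dirs A V0 V1 P)"
  proof (rule convexI)
    fix x y and u v :: real
    assume x: "x \<in> recession_dirs A V0 V1 P" and y: "y \<in> recession_dirs A V0 V1 P"
      and "0 \<le> u" "0 \<le> v" "u + v = 1"
    then have u: "u = 1 - v" and v: "0 \<le> v" "v \<le> 1" by auto
    let ?z = "(1 - v) *\<^sub>R x + v *\<^sub>R y"
    have "\<forall>t\<ge>0. t *\<^sub>R ?z \<in> P \<and> V0 (t *\<^sub>R ?z) \<le> 0 \<and> t *\<^sub>R V1 ?z \<in> A"
    proof (intro allI impI conjI)
      fix t :: real assume "t \<ge> 0"
      then have tx: "t *\<^sub>R x \<in> P" "V0 (t *\<^sub>R x) \<le> 0" "V1 (t *\<^sub>R x) \<in> A"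
        and ty: "t *\<^sub>R y \<in> P" "V0 (t *\<^sub>R y) \<le> 0" "V1 (t *\<^sub>R y) \<in> A"
        using x y superlinear_scaleR[OF V1] by (auto simp: recession_dirs_def)
      have scale: "t *\<^sub>R ?z = (1 - v) *\<^sub>R (t *\<^sub>R x) + v *\<^sub>R (t *\<^sub>R y)"
        by (simp add: scaleR_add_right mult.commute)
      show "t *\<^sub>R ?z \<in> P"
        unfolding scale using \<open>convex P\<close> tx ty v by (intro convexD) auto
      have "V0 (t *\<^sub>R ?z) \<le> (1 - v) * V0 (t *\<^sub>R x) + v * V0 (t *\<^sub>R y)"
        unfolding scale using convex_onD[OF \<open>convex_on UNIV V0\<close>, of v "t *\<^sub>R x" "t *\<^sub>R y"] v
        by simp
      also have "\<dots> \<le> 0"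
        using tx ty v by (simp add: mult_nonneg_nonpos add_nonpos_nonpos)
      finally show "V0 (t *\<^sub>R ?z) \<le> 0" .
      have "(1 - v) *\<^sub>R V1 (t *\<^sub>R x) + v *\<^sub>R V1 (t *\<^sub>R y) \<in> A"
        using \<open>convex A\<close> tx ty v by (intro convexD) auto
      moreover have "cone_le Xp ((1 - v) *\<^sub>R V1 (t *\<^sub>R x) + v *\<^sub>R V1 (t *\<^sub>R y)) (V1 (t *\<^sub>R ?z))"
        unfolding scale using superlinear_concave[OF V1, of "1 - v" "t *\<^sub>R x" "t *\<^sub>R y"] v
        by simp
      ultimately show "t *\<^sub>R V1 ?z \<in> A"
        using cone_le_upward_closed[OF A_up] superlinear_scaleR[OF V1 \<open>t \<ge> 0\<close>] by metis
    qed
    then show "u *\<^sub>R x + v *\<^sub>R y \<in> recession_dirs A V0 V1 P"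
      by (simp add: recession_dirs_def u)
  qed
qed

lemma subspace_convex_cone_inter_uminus:
  assumes "convex_cone K"
  shows "subspace (K \<inter> uminus ` K)"
proof -
  have eq: "K \<inter> uminus ` K = {x. x \<in> K \<and> - x \<in> K}"
    by (force intro: rev_image_eqI)
  have scale: "c *\<^sub>R x \<in> K \<and> - (c *\<^sub>R x) \<in> K" if "x \<in> K" "- x \<in> K" for c x
  proof (cases "c \<ge> 0")
    case True
    then have "c *\<^sub>R x \<in> K" "c *\<^sub>R (- x) \<in> K"
      using that by (simp_all only: convex_cone_scaleR[OF assms])
    then show ?thesis by simp
  next
    case False
    then have "(- c) *\<^sub>R (- x) \<in> K" "(- c) *\<^sub>R x \<in> K"
      using that by (simp_all only: convex_cone_scaleR[OF assms] neg_0_le_iff_le not_le less_imp_le)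
    then show ?thesis by simp
  qed
  have add: "x + y \<in> K \<and> - (x + y) \<in> K" if "x \<in> K" "- x \<in> K" "y \<in> K" "- y \<in> K" for x y
    using convex_cone_add[OF assms, of x y] convex_cone_add[OF assms, of "- x" "- y"] that
    by (simp add: add.commute)
  show ?thesis
    unfolding eq subspace_def using convex_cone_contains_0[OF assms] add scale by auto
qed

lemma recession_dirs_add:
  fixes A :: "'a::{real_vector,topological_space} set" and P :: "'b::real_normed_vector set"
  assumes tvs: "tvs_axioms TYPE('a)" and "closed A" "convex A"
    and A_up: "\<forall>X\<in>A. \<forall>Y\<in>Xp. X + Y \<in> A"
    and "closed P" "convex P" "lower_semicont V0" "convex_on UNIV V0"
    and V1: "superlinear Xp V1"
    and d: "d \<in> recession_dirs A V0 V1 P"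
    and x: "x \<in> P" "V0 x \<le> m" "X + V1 x \<in> A"
  shows "x + d \<in> P \<and> V0 (x + d) \<le> m \<and> X + V1 (x + d) \<in> A"
proof (intro conjI)
  have ray: "t *\<^sub>R d \<in> P" "V0 (t *\<^sub>R d) \<le> 0" "t *\<^sub>R V1 d \<in> A" if "t \<ge> 0" for t
    using d that by (auto simp: recession_dirs_def)
  show "x + d \<in> P"
    using closed_convex_add_ray[OF tvs_axioms_real_normed_vector \<open>closed P\<close> \<open>convex P\<close> x(1)] ray
    by blast
  have "(x, V0 x) + (d, 0) \<in> epigraph V0"
  proof (rule closed_convex_add_ray[OF tvs_axioms_real_normed_vector
        closed_epigraph[OF \<open>lower_semicont V0\<close>] convex_epigraph_convex_on[OF \<open>convex_on UNIV V0\<close>]])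
    show "(x, V0 x) \<in> epigraph V0" by (simp add: epigraph_def)
    show "t *\<^sub>R (d, 0) \<in> epigraph V0" if "t \<ge> 0" for t
      using ray(2)[OF that] by (simp add: epigraph_def)
  qed
  then show "V0 (x + d) \<le> m" using x(2) by (simp add: epigraph_def)
  have "X + V1 x + V1 d \<in> A"
    using closed_convex_add_ray[OF tvs \<open>closed A\<close> \<open>convex A\<close> x(3)] ray(3) by blast
  moreover have "cone_le Xp (X + V1 x + V1 d) (X + V1 (x + d))"
    using superlinear_superadditive[OF V1, of x d] by (simp add: cone_le_def algebra_simps)
  ultimately show "X + V1 (x + d) \<in> A" by (rule cone_le_upward_closed[OF A_up])
qed

lemma exists_orth_compl_in_shift:
  fixes N P :: "'b::euclidean_space set"
  assumes "subspace N" and shift: "\<And>y. y \<in> N \<Longrightarrow> x - y \<in> S" and "S \<subseteq> P"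
  shows "\<exists>z\<in>S. z \<in> orth_compl_in P N"
proof -
  obtain y z where "y \<in> span N" and orth: "\<And>w. w \<in> span N \<Longrightarrow> orthogonal z w" and "x = y + z"
    using orthogonal_subspace_decomp_exists[of N x] by metis
  have "y \<in> N" using \<open>y \<in> span N\<close> \<open>subspace N\<close> span_eq_iff by blast
  then have "z \<in> S" using shift \<open>x = y + z\<close> by force
  moreover have "z \<in> orth_compl_in P N"
    unfolding orth_compl_in_def
    using \<open>z \<in> S\<close> \<open>S \<subseteq> P\<close> orth by (auto simp: orthogonal_def inner_commute span_base)
  ultimately show ?thesis by blast
qed

theorem mainTheorem13:
  fixes Xp :: "'a::{real_vector,topological_space} set"
    and P :: "(real^'n) set"
    and V0 :: "real^'n \<Rightarrow> real"
    and V1 :: "real^'n \<Rightarrow> 'a"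
    and A :: "'a set"
  assumes tvs: "tvs_axioms TYPE('a)"
    and Xp_cone: "convex_cone Xp"
    and Xp_pointed: "\<forall>X. X \<in> Xp \<and> - X \<in> Xp \<longrightarrow> X = 0"
    and P0: "0 \<in> P"
    and V00: "V0 0 = 0" and V0_sym: "\<forall>x. V0 x \<ge> - V0 (- x)"
    and V10: "V1 0 = 0" and V1_sym: "\<forall>x. cone_le Xp (V1 x) (- V1 (- x))"
    and A0: "0 \<in> A" and A_mono: "\<forall>X\<in>A. \<forall>Y\<in>Xp. X + Y \<in> A"
    and A_convex: "convex A" and A_closed: "closed A"
    and P_convex: "convex P" and P_closed: "closed P"
    and V0_convex: "convex_on UNIV V0" and V0_lsc: "lower_semicont V0"
    and V1_sl: "superlinear Xp V1"
  shows "subspace (L_set A V0 V1 P \<inter> uminus ` L_set A V0 V1 P) \<and>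
         (\<forall>(X, m) \<in> C_set A V0 V1 P.
            \<exists>x \<in> P \<inter> orth_compl_in P (L_set A V0 V1 P \<inter> uminus ` L_set A V0 V1 P).
               V0 x \<le> m \<and> X + V1 x \<in> A)"
proof -
  let ?R = "recession_dirs A V0 V1 P"
  have L: "L_set A V0 V1 P = ?R"
    by (rule L_set_eq_recession_dirs[OF tvs A_closed A_convex A0 P_closed P_convex P0
          V0_lsc V0_convex V00])
  have N: "subspace (?R \<inter> uminus ` ?R)"
    by (intro subspace_convex_cone_inter_uminus convex_cone_recession_dirs[OF P_convex P0
          V0_convex V00 A_convex A0 A_mono V1_sl])
  have "\<exists>z \<in> P \<inter> orth_compl_in P (?R \<inter> uminus ` ?R). V0 z \<le> m \<and> X + V1 z \<in> A"
    if feasible: "(X, m) \<in> C_set A V0 V1 P" for X m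
  proof -
    obtain x where x: "x \<in> P" "V0 x \<le> m" "X + V1 x \<in> A"
      using feasible by (auto simp: C_set_def)
    have "x - y \<in> {z \<in> P. V0 z \<le> m \<and> X + V1 z \<in> A}" if "y \<in> ?R \<inter> uminus ` ?R" for y
      using recession_dirs_add[OF tvs A_closed A_convex A_mono P_closed P_convex V0_lsc V0_convex
          V1_sl _ x, of "- y"] that
      by auto
    from exists_orth_compl_in_shift[OF N this] show ?thesis by blast
  qed
  then show ?thesis unfolding L using N by auto
qed

end
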